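(* Let $n$ be a non-negative integer and $r,s\in\mathbb{C}\setminus\mathbb{Z}^{-}$ with $s\neq0$ and $r-s\notin\mathbb{Z}^{-}$. Then \[ \sum_{k=0}^{n}\binom{n}{k}\frac{1}{(k+2)(k+s)\binom{n+r}{k+s}}=\sum_{k=0}^{n}\binom{n}{k}\frac{(-1)^k}{(k+1)(k+2)(k+s)\binom{k+r}{k+s}}. \]
   Context: $\mathbb{Z}^{-}$ denotes the set of negative integers. Binomial coefficients with complex entries: $\binom{x}{y}=\frac{\Gamma(x+1)}{\Gamma(y+1)\Gamma(x-y+1)}$. *)

theory Defs
  imports "HOL-Analysis.Analysis"
begin

definition cbinom :: "complex \<Rightarrow> complex \<Rightarrow> complex" where
  "cbinom x y = Gamma (x + 1) / (Gamma (y + 1) * Gamma (x - y + 1))"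

end

theory Submission
  imports Defs
begin

(*
  With B k m = Beta (s + k) (r - s + 1 + m), the denominators are Beta values:
  (k + s) * binom(n + r, k + s) = 1 / B k (n - k) and (k + s) * binom(k + r, k + s) = 1 / B k 0.
  The recurrence B k (m + 1) = B k m - B (k + 1) m makes B k m the m-th forward difference
  sum_j binom(m, j) (-1)^j B (k + j) 0. Substituting this on the left and summing along the
  diagonals k + j = i leaves the inner sums sum_k binom(i, k) (-1)^k / (k + 2), which the same
  expansion applied to Beta (1 + k) (1 + m) evaluates to Beta 2 (i + 1) = 1 / ((i + 1) (i + 2)).
*)

lemma alternating_binomial_sum_Suc:
  fixes g :: "nat \<Rightarrow> 'a :: comm_ring_1"
  shows "(\<Sum>j\<le>Suc m. of_nat (Suc m choose j) * (-1)^j * g j)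
       = (\<Sum>j\<le>m. of_nat (m choose j) * (-1)^j * g j)
         - (\<Sum>j\<le>m. of_nat (m choose j) * (-1)^j * g (Suc j))"
proof -
  have "(\<Sum>j\<le>Suc m. of_nat (Suc m choose j) * (-1)^j * g j)
      = g 0 + (\<Sum>j\<le>m. of_nat (Suc m choose Suc j) * (-1)^Suc j * g (Suc j))"
    by (subst sum.atMost_Suc_shift) simp
  also have "\<dots> = g 0 + (\<Sum>j\<le>m. of_nat (m choose Suc j) * (-1)^Suc j * g (Suc j))
            - (\<Sum>j\<le>m. of_nat (m choose j) * (-1)^j * g (Suc j))"
    by (simp add: binomial_Suc_Suc ring_distribs sum_subtractf sum_negf)
  also have "g 0 + (\<Sum>j\<le>m. of_nat (m choose Suc j) * (-1)^Suc j * g (Suc j))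
      = (\<Sum>j\<le>m. of_nat (m choose j) * (-1)^j * g j)"
    using sum.atMost_Suc_shift[of "\<lambda>j. of_nat (m choose j) * (-1)^j * g j" m]
    by (simp add: binomial_eq_0)
  finally show ?thesis .
qed

lemma finite_difference_expansion:
  fixes f :: "nat \<Rightarrow> nat \<Rightarrow> 'a :: comm_ring_1"
  assumes rec: "\<And>k m. f k (Suc m) = f k m - f (Suc k) m"
  shows "f k m = (\<Sum>j\<le>m. of_nat (m choose j) * (-1)^j * f (k + j) 0)"
proof (induction m arbitrary: k)
  case 0
  show ?case by simp
next
  case (Suc m)
  have "f k (Suc m) = f k m - f (Suc k) m" by (rule rec)
  also have "\<dots> = (\<Sum>j\<le>m. of_nat (m choose j) * (-1)^j * f (k + j) 0)
                 - (\<Sum>j\<le>m. of_nat (m choose j) * (-1)^j * f (k + Suc j) 0)"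
    by (simp add: Suc.IH)
  also have "\<dots> = (\<Sum>j\<le>Suc m. of_nat (Suc m choose j) * (-1)^j * f (k + j) 0)"
    by (rule alternating_binomial_sum_Suc[symmetric])
  finally show ?case .
qed

lemma binomial_sum_finite_difference_swap:
  fixes f :: "nat \<Rightarrow> nat \<Rightarrow> 'a :: comm_ring_1"
  assumes rec: "\<And>k m. f k (Suc m) = f k m - f (Suc k) m"
  shows "(\<Sum>k\<le>n. of_nat (n choose k) * c k * f k (n - k))
       = (\<Sum>i\<le>n. of_nat (n choose i) * (-1)^i
                   * (\<Sum>k\<le>i. of_nat (i choose k) * (-1)^k * c k) * f i 0)"
proof -
  define t where
    "t k j = of_nat (n choose k) * c k * (of_nat ((n - k) choose j) * (-1)^j * f (k + j) 0)" for k j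
  have triangle: "Sigma {..n} (\<lambda>k. {..n - k}) = {(k, j). k + j \<le> n}" by auto
  have "(\<Sum>k\<le>n. of_nat (n choose k) * c k * f k (n - k)) = (\<Sum>k\<le>n. \<Sum>j\<le>n - k. t k j)"
    unfolding t_def by (subst finite_difference_expansion[of f, OF rec]) (simp add: sum_distrib_left)
  also have "\<dots> = (\<Sum>(k, j)\<in>{(k, j). k + j \<le> n}. t k j)"
    by (simp add: sum.Sigma flip: triangle)
  also have "\<dots> = (\<Sum>i\<le>n. \<Sum>k\<le>i. t k (i - k))"
    by (rule sum.triangle_reindex_eq)
  also have "\<dots> = (\<Sum>i\<le>n. of_nat (n choose i) * (-1)^i
                   * (\<Sum>k\<le>i. of_nat (i choose k) * (-1)^k * c k) * f i 0)"
  proof (rule sum.cong[OF refl])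
    fix i assume "i \<in> {..n}"
    then have "i \<le> n" by simp
    have "t k (i - k) = of_nat (n choose i) * (-1)^i * f i 0 * (of_nat (i choose k) * (-1)^k * c k)"
      if "k \<le> i" for k
    proof -
      have "(of_nat (n choose k) * of_nat ((n - k) choose (i - k)) :: 'a)
          = of_nat (n choose i) * of_nat (i choose k)"
        by (metis choose_mult[OF that \<open>i \<le> n\<close>] of_nat_mult)
      moreover have "(-1 :: 'a)^(i - k) = (-1)^i * (-1)^k"
        using neg_one_power_add_eq_neg_one_power_diff[OF that] by (metis power_add)
      ultimately show ?thesis
        using that by (simp add: t_def mult_ac)
    qed
    then show "(\<Sum>k\<le>i. t k (i - k)) = of_nat (n choose i) * (-1)^i
                 * (\<Sum>k\<le>i. of_nat (i choose k) * (-1)^k * c k) * f i 0"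
      by (simp add: sum_distrib_left mult_ac)
  qed
  finally show ?thesis .
qed

lemma plus_of_nat_notin_nonpos_Ints:
  assumes "x \<notin> \<int>\<^sub>\<le>\<^sub>0"
  shows "x + of_nat k \<notin> \<int>\<^sub>\<le>\<^sub>0"
  using nonpos_Ints_diff_Nats[of "x + of_nat k" "of_nat k"] assms by auto

lemma plus1_in_nonpos_Ints_iff:
  "(z :: 'a :: ring_1) + 1 \<in> \<int>\<^sub>\<le>\<^sub>0 \<longleftrightarrow> z \<in> {of_int m | m. m < 0}"
proof
  assume "z + 1 \<in> \<int>\<^sub>\<le>\<^sub>0"
  then obtain m where "m \<le> 0" "z + 1 = of_int m" by (auto elim!: nonpos_Ints_cases)
  then have "z = of_int (m - 1)" "m - 1 < 0" by (simp_all add: algebra_simps)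
  then show "z \<in> {of_int m | m. m < 0}" by blast
next
  assume "z \<in> {of_int m | m. m < 0}"
  then obtain m where "m < 0" "z = of_int m" by blast
  then have "z + 1 = of_int (m + 1)" "m + 1 \<le> 0" by simp_all
  then show "z + 1 \<in> \<int>\<^sub>\<le>\<^sub>0" by (metis nonpos_Ints_of_int)
qed

lemma Beta_shift_recurrence:
  fixes x y :: "'a :: Gamma"
  assumes "x \<notin> \<int>\<^sub>\<le>\<^sub>0" "y \<notin> \<int>\<^sub>\<le>\<^sub>0"
  shows "Beta (x + of_nat k) (y + of_nat (Suc m))
       = Beta (x + of_nat k) (y + of_nat m) - Beta (x + of_nat (Suc k)) (y + of_nat m)"
  using Beta_plus1_plus1[OF assms[THEN plus_of_nat_notin_nonpos_Ints]]
  by (simp add: algebra_simps)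

lemma Beta_of_nat_plus1:
  "Beta (of_nat a + 1) (of_nat b + 1) = (fact a * fact b / fact (a + b + 1) :: 'a :: Gamma)"
  using Gamma_fact[of "a + b + 1", where 'a = 'a]
  by (simp add: Beta_def Gamma_fact add_ac)

lemma alternating_binomial_sum_inverse_plus2:
  "(\<Sum>k\<le>i. of_nat (i choose k) * (-1)^k * (1 / (of_nat k + 2)))
     = (1 / ((of_nat i + 1) * (of_nat i + 2)) :: 'a :: Gamma)"
proof -
  define B :: "nat \<Rightarrow> nat \<Rightarrow> 'a" where "B k m = Beta (1 + of_nat k) (1 + of_nat m)" for k m
  have "B 1 i = (\<Sum>k\<le>i. of_nat (i choose k) * (-1)^k * B (1 + k) 0)"
    unfolding B_def by (rule finite_difference_expansion) (rule Beta_shift_recurrence; simp)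
  moreover have "B (1 + k) 0 = 1 / (of_nat k + 2)" for k
  proof -
    have "fact (Suc (Suc k)) = (of_nat k + 2) * (fact (Suc k) :: 'a)"
      by (simp add: fact_Suc[of "Suc k"] add_ac)
    then show ?thesis
      using Beta_of_nat_plus1[of "Suc k" 0, where 'a = 'a] by (simp add: B_def add_ac del: fact_Suc)
  qed
  moreover have "B 1 i = 1 / ((of_nat i + 1) * (of_nat i + 2))"
  proof -
    have "fact (Suc (Suc i)) = (of_nat i + 2) * (of_nat i + 1) * (fact i :: 'a)"
      by (simp add: fact_Suc algebra_simps)
    then show ?thesis
      using Beta_of_nat_plus1[of 1 i, where 'a = 'a] by (simp add: B_def add_ac mult_ac)
  qed
  ultimately show ?thesis by simp
qed

(* No hypotheses are needed: at the poles of Gamma both sides take the junk value 0. *)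
lemma cbinom_eq_inverse_Beta: "z * cbinom w z = inverse (Beta z (w - z + 1))"
proof -
  have "z * cbinom w z = (z * rGamma (z + 1)) * rGamma (w - z + 1) * inverse (rGamma (w + 1))"
    by (simp add: cbinom_def Gamma_def divide_inverse inverse_mult_distrib mult_ac)
  also have "\<dots> = inverse (Beta z (w - z + 1))"
    by (simp add: rGamma_plus1 Beta_def Gamma_def divide_inverse inverse_mult_distrib)
  finally show ?thesis .
qed

theorem theorem20:
  fixes n :: nat and r s :: complex
  assumes "r \<notin> {of_int m | m. m < 0}"
    and "s \<notin> {of_int m | m. m < 0}"
    and "s \<noteq> 0"
    and "r - s \<notin> {of_int m | m. m < 0}"
  shows "(\<Sum>k=0..n. of_nat (n choose k) /
            ((of_nat k + 2) * (of_nat k + s) * cbinom (of_nat n + r) (of_nat k + s)))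
       = (\<Sum>k=0..n. of_nat (n choose k) * (-1) ^ k /
            ((of_nat k + 1) * (of_nat k + 2) * (of_nat k + s) * cbinom (of_nat k + r) (of_nat k + s)))"
proof -
  define B where "B k m = Beta (s + of_nat k) (r - s + 1 + of_nat m)" for k m
  have "s \<notin> \<int>\<^sub>\<le>\<^sub>0"
    using assms(2,3) by (auto elim!: nonpos_Ints_cases)
  moreover have "r - s + 1 \<notin> \<int>\<^sub>\<le>\<^sub>0"
    using assms(4) plus1_in_nonpos_Ints_iff by blast
  ultimately have rec: "B k (Suc m) = B k m - B (Suc k) m" for k m
    unfolding B_def by (rule Beta_shift_recurrence)
  have cbinom_B: "(of_nat k + s) * cbinom (of_nat j + r) (of_nat k + s) = inverse (B k (j - k))"
    if "k \<le> j" for j k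
    using cbinom_eq_inverse_Beta[of "of_nat k + s" "of_nat j + r"] that
    by (simp add: B_def of_nat_diff algebra_simps)
  have "(\<Sum>k=0..n. of_nat (n choose k) /
            ((of_nat k + 2) * (of_nat k + s) * cbinom (of_nat n + r) (of_nat k + s)))
      = (\<Sum>k\<le>n. of_nat (n choose k) * (1 / (of_nat k + 2)) * B k (n - k))"
    unfolding atLeast0AtMost by (intro sum.cong refl) (simp add: mult.assoc cbinom_B divide_inverse)
  also have "\<dots> = (\<Sum>k\<le>n. of_nat (n choose k) * (-1)^k
                     * (1 / ((of_nat k + 1) * (of_nat k + 2))) * B k 0)"
    by (subst binomial_sum_finite_difference_swap[of B, OF rec])
      (simp only: alternating_binomial_sum_inverse_plus2)
  also have "\<dots> = (\<Sum>k=0..n. of_nat (n choose k) * (-1) ^ k /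
            ((of_nat k + 1) * (of_nat k + 2) * (of_nat k + s) * cbinom (of_nat k + r) (of_nat k + s)))"
    unfolding atLeast0AtMost
    by (intro sum.cong refl) (simp add: mult.assoc cbinom_B[of k k for k] divide_inverse)
  finally show ?thesis .
qed

end
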